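(* Let $q$ be a power of $2$, let $m\equiv2\pmod4$ with $m\ge6$, and let $n=q^m+1$. Then the largest coset leader modulo $n$ is $\delta_{1,n}=\frac{q(q-1)(q^m+1)}{2(q^2+1)}$, and $|C_{\delta_{1,n}}|=4$.
   Context: For $0\le s\le n-1$, $C_s=\{sq^i\bmod n:i\ge0\}$ is the $q$-cyclotomic coset of $s$ modulo $n$; its least element is its coset leader; $\delta_{i,n}$ denotes the $i$-th largest coset leader modulo $n$. *)

theory Defs
  imports Main
begin

definition cyc_coset :: "nat \<Rightarrow> nat \<Rightarrow> nat \<Rightarrow> nat set" where
  "cyc_coset q n s = {s * q ^ i mod n | i. True}"

definition is_coset_leader :: "nat \<Rightarrow> nat \<Rightarrow> nat \<Rightarrow> bool" where
  "is_coset_leader q n s \<longleftrightarrow> s < n \<and> s = Min (cyc_coset q n s)"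

definition largest_coset_leader :: "nat \<Rightarrow> nat \<Rightarrow> nat" where
  "largest_coset_leader q n = Max {s. is_coset_leader q n s}"

end

theory Submission
  imports Defs
begin

(* Write q = 2g + 2, n = (q^2 + 1) N and D = (g + 1)(2g + 1) N, so that D/n = q(q - 1)/(2(q^2 + 1))
   has the purely periodic q-ary expansion 0.(g g g+1 g+1). The coset of D is
   {D, D + N, D + (q + 1) N, D + q N}, hence D is a leader and its coset has 4 elements.
   Conversely, if a leader s exceeded D, every t in its coset would satisfy D < t < n - D, since
   multiplication by q^m = -1 (mod n) maps t to n - t. Then every q-ary digit of t/n is g or g + 1,
   i.e. a bit, and these bits are antiperiodic with period m. Comparing four consecutive digits with
   those of D/n shows that two zero bits are followed by two ones, and by antiperiodicity two ones by
   two zeros; so from some point on the digits repeat the block (g g g+1 g+1). Along these blocks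
   t - D is multiplied by q^4 every four steps, which contradicts the periodicity of the coset. *)

lemma odd_power_plus_one_dvd:
  fixes x :: "'a::comm_ring_1"
  assumes "odd l"
  shows "x + 1 dvd x ^ l + 1"
proof -
  have "x ^ l - (- 1) ^ l = (x - (- 1)) * (\<Sum>i<l. (- 1) ^ (l - Suc i) * x ^ i)"
    by (rule power_diff_sumr2)
  with assms have "x ^ l + 1 = (x + 1) * (\<Sum>i<l. (- 1) ^ (l - Suc i) * x ^ i)"
    by simp
  then show ?thesis by (rule dvdI)
qed

lemma antiperiodic_equal_neighbours:
  fixes b :: "nat \<Rightarrow> bool"
  assumes flip: "\<And>i. b (i + m) = (\<not> b i)" and "even m"
  shows "\<exists>i. b i = b (Suc i)"
proof (rule ccontr)
  assume "\<nexists>i. b i = b (Suc i)"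
  then have alternating: "b (Suc i) = (\<not> b i)" for i by blast
  have "b (i + 2 * k) = b i" for i k
    by (induction k) (simp_all add: alternating)
  with \<open>even m\<close> have "b (0 + m) = b 0" by (metis evenE)
  with flip[of 0] show False by simp
qed

lemma antiperiodic_block_pattern:
  fixes b :: "nat \<Rightarrow> bool"
  assumes flip: "\<And>i. b (i + m) = (\<not> b i)" and "even m"
    and forced: "\<And>i. \<not> b i \<Longrightarrow> \<not> b (i + 1) \<Longrightarrow> b (i + 2) \<and> b (i + 3)"
  shows "\<exists>j. \<forall>k. \<not> b (j + 4 * k) \<and> \<not> b (j + 4 * k + 1) \<and> b (j + 4 * k + 2) \<and> b (j + 4 * k + 3)"
proof -
  have forced': "\<not> b (i + 4) \<and> \<not> b (i + 5)" if "b (i + 2)" "b (i + 3)" for i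
  proof -
    have "b (i + m + 4) \<and> b (i + m + 5)"
      using forced[of "i + m + 2"] that flip[of "i + 2"] flip[of "i + 3"]
      by (simp add: eval_nat_numeral ac_simps)
    then show ?thesis using flip[of "i + 4"] flip[of "i + 5"] by (simp add: eval_nat_numeral ac_simps)
  qed
  obtain i where "b i = b (Suc i)"
    using antiperiodic_equal_neighbours[of b m] flip \<open>even m\<close> by blast
  then obtain j where j: "\<not> b j" "\<not> b (j + 1)"
    using flip[of i] flip[of "Suc i"] by (cases "b i") (auto simp: ac_simps)
  have zeros: "\<not> b (j + 4 * k) \<and> \<not> b (j + 4 * k + 1)" for k
  proof (induction k)
    case (Suc k)
    define i where "i = j + 4 * k"
    have "b (i + 2)" "b (i + 3)" using forced Suc unfolding i_def by blast+
    then have "\<not> b (i + 4) \<and> \<not> b (i + 5)" by (rule forced')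
    moreover have "j + 4 * Suc k = i + 4" "j + 4 * Suc k + 1 = i + 5" by (simp_all add: i_def)
    ultimately show ?case by (simp only: simp_thms)
  qed (use j in simp)
  show ?thesis
    using zeros forced by (metis (no_types))
qed

lemma orbit_mult_power:
  fixes t :: "nat \<Rightarrow> nat"
  assumes step: "\<And>i. t (Suc i) = q * t i mod n"
  shows "t j * q ^ k = t (j + k) + n * (\<Sum>i<k. q * t (j + i) div n * q ^ (k - Suc i))"
proof (induction k)
  case (Suc k)
  define y where "y i = q * t (j + i) div n" for i
  have digits:
    "(\<Sum>i<Suc k. y i * q ^ (Suc k - Suc i)) = q * (\<Sum>i<k. y i * q ^ (k - Suc i)) + y k"
  proof -
    have "(\<Sum>i<k. y i * q ^ (Suc k - Suc i)) = (\<Sum>i<k. q * (y i * q ^ (k - Suc i)))"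
    proof (rule sum.cong)
      fix i assume "i \<in> {..<k}"
      then have "Suc k - Suc i = Suc (k - Suc i)" by auto
      then show "y i * q ^ (Suc k - Suc i) = q * (y i * q ^ (k - Suc i))" by simp
    qed simp
    then show ?thesis by (simp add: sum_distrib_left)
  qed
  have "t j * q ^ Suc k = q * t (j + k) + n * (q * (\<Sum>i<k. y i * q ^ (k - Suc i)))"
    using Suc.IH by (simp add: y_def algebra_simps)
  also have "q * t (j + k) = n * y k + t (j + Suc k)"
    using step[of "j + k"] by (simp add: y_def)
  finally show ?case unfolding y_def[symmetric] digits by (simp add: algebra_simps)
qed simp

lemma mult_power_mod_eq_diff:
  fixes q m n r :: nat
  assumes "q ^ m + 1 = n" and "0 < r" and "r < n"
  shows "r * q ^ m mod n = n - r"
proof -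
  obtain r' where r: "r = Suc r'" using assms(2) by (cases r) auto
  have "r * q ^ m = (n - r) + r' * n"
    using assms(3) unfolding r assms(1)[symmetric] by (simp add: algebra_simps)
  also have "\<dots> mod n = n - r" by (simp only: mod_mult_self1) (use assms(2,3) in simp)
  finally show ?thesis .
qed

lemma mod_mult_power_Suc:
  fixes s q n :: nat
  shows "s * q ^ Suc i mod n = q * (s * q ^ i mod n) mod n"
proof -
  have "s * q ^ Suc i = q * (s * q ^ i)" by simp
  then show ?thesis by (simp only: mod_mult_right_eq)
qed

lemma finite_cyc_coset: "0 < n \<Longrightarrow> finite (cyc_coset q n s)"
  by (rule finite_subset[of _ "{..<n}"]) (auto simp: cyc_coset_def)

lemma coset_leader_le_orbit:
  assumes "is_coset_leader q n s"
  shows "s \<le> s * q ^ i mod n"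
proof -
  have "finite (cyc_coset q n s)"
    using assms by (intro finite_cyc_coset) (simp add: is_coset_leader_def)
  moreover have "s * q ^ i mod n \<in> cyc_coset q n s" by (auto simp: cyc_coset_def)
  ultimately show ?thesis using assms by (metis Min_le is_coset_leader_def)
qed

lemma cyc_coset_eq_image_period:
  assumes "0 < p" and period: "s * q ^ p mod n = s"
  shows "cyc_coset q n s = (\<lambda>i. s * q ^ i mod n) ` {..<p}"
proof -
  have reduce: "s * q ^ (p * c + r) mod n = s * q ^ r mod n" for c r
  proof (induction c)
    case (Suc c)
    have "s * q ^ (p * Suc c + r) = s * q ^ p * q ^ (p * c + r)"
      by (simp add: power_add algebra_simps)
    then have "s * q ^ (p * Suc c + r) mod n = (s * q ^ p mod n) * q ^ (p * c + r) mod n"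
      by (simp only: mod_mult_left_eq)
    then show ?case using Suc period by simp
  qed simp
  show ?thesis
  proof (intro equalityI subsetI)
    fix x assume "x \<in> cyc_coset q n s"
    then obtain i where "x = s * q ^ i mod n" by (auto simp: cyc_coset_def)
    then have "x = s * q ^ (i mod p) mod n" using reduce[of "i div p" "i mod p"] by simp
    moreover have "i mod p \<in> {..<p}" using \<open>0 < p\<close> by simp
    ultimately show "x \<in> (\<lambda>i. s * q ^ i mod n) ` {..<p}" by blast
  qed (auto simp: cyc_coset_def)
qed

locale coset_leader_setting =
  fixes q g n N D :: nat
  assumes q_eq: "q = 2 * g + 2"
    and n_eq: "n = (q ^ 2 + 1) * N"
    and D_eq: "D = (g + 1) * (2 * g + 1) * N"
    and odd_n: "odd n"
begin

lemma N_pos: "0 < N"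
  using odd_n n_eq by (cases N) auto

lemma D_eq_div: "D = q * (q - 1) * n div (2 * (q ^ 2 + 1))"
proof -
  have q_pred: "q * (q - 1) = 2 * ((g + 1) * (2 * g + 1))" unfolding q_eq by simp
  have "q * (q - 1) * n = (2 * (q ^ 2 + 1)) * D" unfolding n_eq D_eq q_pred by (simp only: ac_simps)
  then show ?thesis by (simp only:) (rule nonzero_mult_div_cancel_left[symmetric], simp)
qed

lemma cyc_coset_D_bound: "D + (q + 1) * N < n"
proof -
  have "(g + 1) * (2 * g + 1) + (q + 1) < q ^ 2 + 1"
    unfolding q_eq by (simp add: power2_eq_square algebra_simps)
  then show ?thesis unfolding D_eq n_eq using N_pos by (metis add_mult_distrib mult_less_mono1)
qed

lemma D_expansion: "D * q ^ 4 = D + n * (g * q ^ 3 + g * q ^ 2 + (g + 1) * q + (g + 1))"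
  unfolding D_eq n_eq q_eq by algebra

lemma g_n_le_q_D: "g * n \<le> q * D"
proof -
  have "g * (q ^ 2 + 1) \<le> q * ((g + 1) * (2 * g + 1))"
    unfolding q_eq by (simp add: power2_eq_square algebra_simps)
  then show ?thesis unfolding n_eq D_eq by (metis mult.assoc mult_le_mono1)
qed

lemma orbit_digit:
  assumes "D < t" and "t < n - D"
  shows "q * t div n = g + of_bool (n < 2 * t)"
proof (cases "n < 2 * t")
  case True
  have "(g + 1) * n \<le> (g + 1) * (2 * t)" using True by (intro mult_le_mono2) simp
  also have "\<dots> = q * t" unfolding q_eq by simp
  finally have "(g + 1) * n \<le> q * t" .
  moreover have "q * t < (g + 2) * n"
  proof -
    have "q * t < q * (n - D)" using assms(2) q_eq by (intro mult_strict_left_mono) simp_all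
    also have "\<dots> = q * n - q * D" by (simp add: diff_mult_distrib2)
    also have "\<dots> \<le> q * n - g * n" using g_n_le_q_D by simp
    also have "\<dots> = (g + 2) * n" unfolding q_eq by (simp add: algebra_simps)
    finally show ?thesis .
  qed
  ultimately show ?thesis using True by (simp add: div_nat_eqI algebra_simps)
next
  case False
  with odd_n have "2 * t < n" by (cases "2 * t = n") auto
  then have "(g + 1) * (2 * t) < (g + 1) * n" by (intro mult_strict_left_mono) simp_all
  then have "q * t < (g + 1) * n" unfolding q_eq by (simp add: algebra_simps)
  moreover have "g * n \<le> q * t"
    using g_n_le_q_D assms(1) q_eq by (meson le_trans less_imp_le_nat mult_le_mono2)
  ultimately show ?thesis using False by (simp add: div_nat_eqI algebra_simps)
qed

lemma window_ge_D_expansion: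
  assumes "D < t" and "t' < n" and window: "t * q ^ 4 = t' + n * W"
  shows "g * q ^ 3 + g * q ^ 2 + (g + 1) * q + (g + 1) \<le> W"
proof (rule ccontr)
  let ?V = "g * q ^ 3 + g * q ^ 2 + (g + 1) * q + (g + 1)"
  assume "\<not> ?V \<le> W"
  have "t * q ^ 4 < n * (W + 1)" using window \<open>t' < n\<close> by simp
  also have "\<dots> \<le> n * ?V" using \<open>\<not> ?V \<le> W\<close> by simp
  also have "\<dots> \<le> D * q ^ 4" using D_expansion by simp
  finally have "t * q ^ 4 < D * q ^ 4" .
  with \<open>D < t\<close> show False by simp
qed

lemma window_D_expansion_increasing:
  assumes "D < t" and window: "t * q ^ 4 = t' + n * (g * q ^ 3 + g * q ^ 2 + (g + 1) * q + (g + 1))"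
  shows "t < t'"
proof -
  have "t' + D * q ^ 4 = t * q ^ 4 + D" using window D_expansion by simp
  moreover have "t * q ^ 4 = (t - D) * q ^ 4 + D * q ^ 4"
    using assms(1) by (simp add: diff_mult_distrib)
  moreover have "t - D < (t - D) * q ^ 4"
    using assms(1) one_less_power[of q 4] q_eq by simp
  ultimately show ?thesis by linarith
qed

lemma D_expansion_blocks_increasing:
  assumes above: "\<And>k. D < t (j + 4 * k)"
    and blocks: "\<And>k. t (j + 4 * k) * q ^ 4
      = t (j + 4 * Suc k) + n * (g * q ^ 3 + g * q ^ 2 + (g + 1) * q + (g + 1))"
    and "0 < p"
  shows "t j < t (j + 4 * p)"
proof -
  have "t (j + 4 * k) < t (j + 4 * Suc k)" for k
    using window_D_expansion_increasing[OF above blocks] .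
  then have "t (j + 4 * 0) < t (j + 4 * p)"
    by (rule lift_Suc_mono_less[of "\<lambda>k. t (j + 4 * k)"]) (use \<open>0 < p\<close> in simp)
  then show ?thesis by simp
qed

lemma orbit_meets_D:
  fixes t :: "nat \<Rightarrow> nat"
  assumes step: "\<And>i. t (Suc i) = q * t i mod n"
    and flip: "\<And>i. t (i + m) = n - t i" and "even m" and "0 < m"
  shows "\<exists>i. t i \<le> D"
proof (rule ccontr)
  assume "\<nexists>i. t i \<le> D"
  then have above: "D < t i" for i by (simp add: not_le)
  have below: "t i < n - D" for i using above[of "i + m"] flip[of i] by simp
  define b where "b i \<longleftrightarrow> n < 2 * t i" for i
  have b_flip: "b (i + m) = (\<not> b i)" for i
  proof -
    have "2 * t i \<noteq> n" using odd_n by auto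
    then show ?thesis using below[of i] unfolding b_def flip by auto
  qed
  have digit: "q * t i div n = g + of_bool (b i)" for i
    using orbit_digit[OF above below] unfolding b_def .
  have window: "t j * q ^ 4 = t (j + 4) + n * ((g + of_bool (b j)) * q ^ 3
      + (g + of_bool (b (j + 1))) * q ^ 2 + (g + of_bool (b (j + 2))) * q + (g + of_bool (b (j + 3))))"
    for j
  proof -
    have "t j * q ^ 4 = t (j + 4) + n * (q * t j div n * q ^ 3 + q * t (j + 1) div n * q ^ 2
        + q * t (j + 2) div n * q + q * t (j + 3) div n)"
      using orbit_mult_power[of t q n, OF step, of j 4] by (simp add: lessThan_nat_numeral ac_simps)
    then show ?thesis unfolding digit .
  qed
  have forced: "b (j + 2) \<and> b (j + 3)" if "\<not> b j" "\<not> b (j + 1)" for j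
  proof -
    have "t (j + 4) < n" using below[of "j + 4"] by simp
    from window_ge_D_expansion[OF above[of j] this window[of j]] that q_eq show ?thesis
      by (cases "b (j + 2)"; cases "b (j + 3)") (simp_all add: algebra_simps)
  qed
  obtain j where pattern:
    "\<And>k. \<not> b (j + 4 * k) \<and> \<not> b (j + 4 * k + 1) \<and> b (j + 4 * k + 2) \<and> b (j + 4 * k + 3)"
    using antiperiodic_block_pattern[of b m] b_flip \<open>even m\<close> forced by blast
  have "t (j + 4 * k) * q ^ 4
      = t (j + 4 * Suc k) + n * (g * q ^ 3 + g * q ^ 2 + (g + 1) * q + (g + 1))" for k
    using window[of "j + 4 * k"] pattern[of k] by (simp add: ac_simps)
  then have "t j < t (j + 4 * (m div 2))"
    using above \<open>even m\<close> \<open>0 < m\<close> by (intro D_expansion_blocks_increasing) auto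
  moreover have "t (j + m + m) = t j" using flip[of "j + m"] flip[of j] below[of j] by simp
  moreover have "4 * (m div 2) = m + m" using \<open>even m\<close> by auto
  ultimately show False by (simp add: add.assoc)
qed

lemma coset_leader_le_D:
  assumes "q ^ m + 1 = n" and "even m" and "0 < m" and leader: "is_coset_leader q n s"
  shows "s \<le> D"
proof (rule ccontr)
  assume "\<not> s \<le> D"
  define t where "t i = s * q ^ i mod n" for i
  have above: "s \<le> t i" for i unfolding t_def using leader by (rule coset_leader_le_orbit)
  have step: "t (Suc i) = q * t i mod n" for i
    unfolding t_def by (rule mod_mult_power_Suc)
  have "t (i + m) = n - t i" for i
  proof -
    have "t (i + m) = t i * q ^ m mod n"
      unfolding t_def power_add mult.assoc[symmetric] by (rule mod_mult_left_eq[symmetric])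
    also have "\<dots> = n - t i"
      using assms(1) above[of i] \<open>\<not> s \<le> D\<close>
      by (intro mult_power_mod_eq_diff) (auto simp: t_def N_pos n_eq)
    finally show ?thesis .
  qed
  with orbit_meets_D[of t, OF step] assms(2,3) obtain i where "t i \<le> D" by blast
  with above[of i] \<open>\<not> s \<le> D\<close> show False by simp
qed

lemma cyc_coset_D: "cyc_coset q n D = {D, D + N, D + (q + 1) * N, D + q * N}"
proof -
  have reduce: "(r + k * n) mod n = r" if "r \<le> D + (q + 1) * N" for r k
    using that cyc_coset_D_bound by simp
  have "q * D = (D + N) + g * n" unfolding D_eq n_eq q_eq by algebra
  then have r1: "q * D mod n = D + N" using reduce[of "D + N" g] by simp
  have "q * (D + N) = (D + (q + 1) * N) + g * n" unfolding D_eq n_eq q_eq by algebra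
  then have r2: "q * (D + N) mod n = D + (q + 1) * N" using reduce[of "D + (q + 1) * N" g] by simp
  have "q * (D + (q + 1) * N) = (D + q * N) + (g + 1) * n" unfolding D_eq n_eq q_eq by algebra
  then have r3: "q * (D + (q + 1) * N) mod n = D + q * N" using reduce[of "D + q * N" "g + 1"] by simp
  have "q * (D + q * N) = D + (g + 1) * n" unfolding D_eq n_eq q_eq by algebra
  then have r4: "q * (D + q * N) mod n = D" using reduce[of D "g + 1"] by simp
  define r where "r i = D * q ^ i mod n" for i
  have step: "r (Suc i) = q * r i mod n" for i unfolding r_def by (rule mod_mult_power_Suc)
  have "r 0 = D" using cyc_coset_D_bound by (simp add: r_def)
  then have "r 1 = D + N" using step[of 0] r1 by simp
  then have "r 2 = D + (q + 1) * N" using step[of 1] r2 by (simp add: numeral_2_eq_2)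
  then have "r 3 = D + q * N" using step[of 2] r3 by (simp add: numeral_3_eq_3)
  then have "r 4 = D" using step[of 3] r4 by (simp add: eval_nat_numeral)
  have "cyc_coset q n D = r ` {..<4}"
    unfolding r_def using \<open>r 4 = D\<close> by (intro cyc_coset_eq_image_period) (simp_all add: r_def)
  then show ?thesis
    using \<open>r 0 = D\<close> \<open>r 1 = D + N\<close> \<open>r 2 = D + (q + 1) * N\<close> \<open>r 3 = D + q * N\<close>
    by (auto simp: lessThan_nat_numeral lessThan_Suc)
qed

lemma is_coset_leader_D: "is_coset_leader q n D"
  using cyc_coset_D_bound by (simp add: is_coset_leader_def cyc_coset_D)

lemma card_cyc_coset_D: "card (cyc_coset q n D) = 4"
proof -
  have "2 \<le> q" using q_eq by simp
  with N_pos show ?thesis by (simp add: cyc_coset_D)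
qed

lemma largest_coset_leader_eq_D:
  assumes "q ^ m + 1 = n" and "even m" and "0 < m"
  shows "largest_coset_leader q n = D"
proof -
  have "finite {s. is_coset_leader q n s}"
    by (rule finite_subset[of _ "{..<n}"]) (auto simp: is_coset_leader_def)
  then show ?thesis unfolding largest_coset_leader_def
    using coset_leader_le_D[OF assms] is_coset_leader_D by (intro Max_eqI) auto
qed

end

theorem lemma6:
  fixes q m k n :: nat
  assumes "q = 2 ^ k" and "k \<ge> 1"
    and "m mod 4 = 2" and "m \<ge> 6"
    and "n = q ^ m + 1"
  shows "largest_coset_leader q n = q * (q - 1) * (q ^ m + 1) div (2 * (q ^ 2 + 1))
         \<and> card (cyc_coset q n (largest_coset_leader q n)) = 4"
proof -
  define g where "g = 2 ^ (k - 1) - (1::nat)"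
  have "q = 2 * 2 ^ (k - 1)" using assms(1,2) by (simp flip: power_Suc)
  moreover have "(1::nat) \<le> 2 ^ (k - 1)" by simp
  ultimately have q: "q = 2 * g + 2" unfolding g_def by linarith
  \<comment> \<open>m mod 4 = 2 is used only as: m is even and m div 2 is odd.\<close>
  have "even m" "0 < m" "odd (m div 2)" using assms(3) by presburger+
  have qm: "q ^ m = (q ^ 2) ^ (m div 2)" using \<open>even m\<close> by (simp flip: power_mult)
  have "int (q ^ 2 + 1) dvd int (q ^ m + 1)"
    unfolding qm of_nat_add of_nat_power of_nat_1 using \<open>odd (m div 2)\<close> by (rule odd_power_plus_one_dvd)
  then have "q ^ 2 + 1 dvd n" unfolding assms(5) by (simp only: of_nat_dvd_iff)
  then obtain N where n: "n = (q ^ 2 + 1) * N" by (elim dvdE)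
  have "odd n" using assms(5) q \<open>0 < m\<close> by simp
  interpret coset_leader_setting q g n N "(g + 1) * (2 * g + 1) * N"
    using q n \<open>odd n\<close> by unfold_locales auto
  show ?thesis
    using largest_coset_leader_eq_D[OF assms(5)[symmetric] \<open>even m\<close> \<open>0 < m\<close>]
      D_eq_div card_cyc_coset_D assms(5) by simp
qed

end
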